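(* For all $\varepsilon,\varepsilon'\in\mathbb R$ the Lie algebras $\mathfrak g_\varepsilon$ and $\mathfrak g_{\varepsilon'}$ are isomorphic, but the metric Lie algebras $(\mathfrak g_\varepsilon,\langle\cdot,\cdot\rangle)$ and $(\mathfrak g_{\varepsilon'},\langle\cdot,\cdot\rangle)$ are isometrically isomorphic (i.e. there is a Lie algebra isomorphism preserving the inner products) if and only if $\varepsilon=\varepsilon'$.
   Context: For $\varepsilon\in\mathbb R$, $\mathfrak g_\varepsilon$ is the Lie algebra with basis $e_1,\dots,e_7$ and nonzero brackets $[e_1,e_5]=\tfrac12e_1$, $[e_2,e_5]=-\tfrac12e_2$, $[e_2,e_6]=-\tfrac12e_1$, $[e_3,e_5]=2e_3$, $[e_3,e_7]=-\tfrac12e_1$, $[e_4,e_5]=-e_2$, $[e_4,e_6]=-e_1$, $[e_5,e_6]=-\varepsilon e_2-2e_4-e_6$, $[e_5,e_7]=-\varepsilon e_3+\tfrac32e_7$, $[e_6,e_7]=-\sqrt2e_2$. With dual basis $e^i$, $\langle\cdot,\cdot\rangle=2(e^1\cdot e^5+e^2\cdot e^6+e^3\cdot e^7)-(e^4)^2$, an inner product of signature $(4,3)$ on $\mathfrak g_\varepsilon$. *)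

theory Defs
  imports "HOL-Analysis.Analysis"
begin

definition idx :: "nat \<Rightarrow> 7" where
  "idx i = of_nat (i - 1)"

definition ebas :: "nat \<Rightarrow> real ^ 7" where
  "ebas i = axis (idx i) 1"

definition brk0 :: "real \<Rightarrow> nat \<Rightarrow> nat \<Rightarrow> real ^ 7" where
  "brk0 eps i j =
    (if (i, j) = (1, 5) then (1/2) *\<^sub>R ebas 1
     else if (i, j) = (2, 5) then (-1/2) *\<^sub>R ebas 2
     else if (i, j) = (2, 6) then (-1/2) *\<^sub>R ebas 1
     else if (i, j) = (3, 5) then 2 *\<^sub>R ebas 3
     else if (i, j) = (3, 7) then (-1/2) *\<^sub>R ebas 1
     else if (i, j) = (4, 5) then - ebas 2
     else if (i, j) = (4, 6) then - ebas 1
     else if (i, j) = (5, 6) then (- eps) *\<^sub>R ebas 2 - 2 *\<^sub>R ebas 4 - ebas 6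
     else if (i, j) = (5, 7) then (- eps) *\<^sub>R ebas 3 + (3/2) *\<^sub>R ebas 7
     else if (i, j) = (6, 7) then (- sqrt 2) *\<^sub>R ebas 2
     else 0)"

definition brk :: "real \<Rightarrow> nat \<Rightarrow> nat \<Rightarrow> real ^ 7" where
  "brk eps i j = (if i < j then brk0 eps i j else if j < i then - brk0 eps j i else 0)"

definition lie_br :: "real \<Rightarrow> real ^ 7 \<Rightarrow> real ^ 7 \<Rightarrow> real ^ 7" where
  "lie_br eps x y =
     (\<Sum>i\<in>{1..7}. \<Sum>j\<in>{1..7}. (x $ idx i * y $ idx j) *\<^sub>R brk eps i j)"

text \<open>The inner product 2(e^1 e^5 + e^2 e^6 + e^3 e^7) - (e^4)^2, with the
  symmetric product e^i e^j = (e^i \<otimes> e^j + e^j \<otimes> e^i)/2, so that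
  <e_1,e_5> = <e_2,e_6> = <e_3,e_7> = 1 and <e_4,e_4> = -1.\<close>
definition ip :: "real ^ 7 \<Rightarrow> real ^ 7 \<Rightarrow> real" where
  "ip x y =
     x $ idx 1 * y $ idx 5 + x $ idx 5 * y $ idx 1
   + x $ idx 2 * y $ idx 6 + x $ idx 6 * y $ idx 2
   + x $ idx 3 * y $ idx 7 + x $ idx 7 * y $ idx 3
   - x $ idx 4 * y $ idx 4"

definition lie_iso :: "real \<Rightarrow> real \<Rightarrow> (real ^ 7 \<Rightarrow> real ^ 7) \<Rightarrow> bool" where
  "lie_iso eps eps' f \<longleftrightarrow> linear f \<and> bij f \<and>
     (\<forall>x y. f (lie_br eps x y) = lie_br eps' (f x) (f y))"

definition metric_lie_iso :: "real \<Rightarrow> real \<Rightarrow> (real ^ 7 \<Rightarrow> real ^ 7) \<Rightarrow> bool" where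
  "metric_lie_iso eps eps' f \<longleftrightarrow> lie_iso eps eps' f \<and>
     (\<forall>x y. ip (f x) (f y) = ip x y)"

end

theory Submission
  imports Defs
begin

(* The parameter \<epsilon> only enters as the e2-component of [e5,e6] and the e3-component of
   [e5,e7]. Since e6, e2 and e7, e3 lie in different eigenspaces of ad(e5), shearing e6 along
   e2 and e7 along e3 shifts \<epsilon> arbitrarily, so all g_\<epsilon> are isomorphic.
   An isometric isomorphism f cannot shear: the brackets force f e1 = e1, pairing with e1
   reads off the e5-coordinates of all f e_i, and a chase through the remaining brackets and
   pairings shows that f e3 and f e7 have e3- resp. e7-coefficient 1. Comparing the
   e3-coefficients of f [e5,e7] = [f e5, f e7] then gives \<epsilon> = \<epsilon>'. *)

lemma idx_numerals:
  "idx 1 = 0" "idx 2 = 1" "idx 3 = 2" "idx 4 = 3" "idx 5 = 4" "idx 6 = 5" "idx 7 = 6"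
  by (simp_all add: idx_def)

lemma atLeastAtMost_1_7: "{1..7::nat} = {1, 2, 3, 4, 5, 6, 7}"
  by auto

lemma exhaust_7: "(x :: 7) = 0 \<or> x = 1 \<or> x = 2 \<or> x = 3 \<or> x = 4 \<or> x = 5 \<or> x = 6"
proof (induct x)
  case (of_int z)
  then have "z = 0 \<or> z = 1 \<or> z = 2 \<or> z = 3 \<or> z = 4 \<or> z = 5 \<or> z = 6" by fastforce
  then show ?case by auto
qed

(* Keep the numeral 1 :: nat intact, so that the coordinate rules stated at idx 1 apply. *)
declare One_nat_def [simp del]

lemma vec7_eq_iff: "x = y \<longleftrightarrow> (\<forall>k\<in>{1..7}. x $ idx k = y $ idx k)"
proof -
  have "(\<forall>i. P i) \<longleftrightarrow> P 0 \<and> P 1 \<and> P 2 \<and> P 3 \<and> P 4 \<and> P 5 \<and> P 6" for P :: "7 \<Rightarrow> bool"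
    by (metis exhaust_7)
  then show ?thesis
    unfolding vec_eq_iff atLeastAtMost_1_7 by (simp add: idx_numerals)
qed

lemma ebas_coord:
  "i \<in> {1..7} \<Longrightarrow> k \<in> {1..7} \<Longrightarrow> ebas i $ idx k = (if i = k then 1 else 0)"
  unfolding atLeastAtMost_1_7 by (auto simp: ebas_def axis_def idx_numerals)

definition wedge :: "real ^ 7 \<Rightarrow> real ^ 7 \<Rightarrow> nat \<Rightarrow> nat \<Rightarrow> real" where
  "wedge x y i j = x $ idx i * y $ idx j - x $ idx j * y $ idx i"

lemma lie_br_coords:
  "lie_br e x y $ idx 1 =
     1/2 * wedge x y 1 5 - 1/2 * wedge x y 2 6 - 1/2 * wedge x y 3 7 - wedge x y 4 6"
  "lie_br e x y $ idx 2 =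
     -1/2 * wedge x y 2 5 - wedge x y 4 5 - e * wedge x y 5 6 - sqrt 2 * wedge x y 6 7"
  "lie_br e x y $ idx 3 = 2 * wedge x y 3 5 - e * wedge x y 5 7"
  "lie_br e x y $ idx 4 = -2 * wedge x y 5 6"
  "lie_br e x y $ idx 5 = 0"
  "lie_br e x y $ idx 6 = - wedge x y 5 6"
  "lie_br e x y $ idx 7 = 3/2 * wedge x y 5 7"
  unfolding lie_br_def atLeastAtMost_1_7 wedge_def
  by (simp_all add: brk_def brk0_def ebas_def axis_def idx_numerals algebra_simps)

lemma lie_br_ebas:
  assumes "i \<in> {1..7}" "j \<in> {1..7}"
  shows "lie_br e (ebas i) (ebas j) = brk e i j"
proof -
  have sum_if_const: "(\<Sum>x\<in>A. if P then g x else 0) = (if P then sum g A else 0)"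
    for P and g :: "nat \<Rightarrow> real ^ 7" and A :: "nat set"
    by (cases P) simp_all
  have "lie_br e (ebas i) (ebas j) =
      (\<Sum>k\<in>{1..7}. \<Sum>l\<in>{1..7}. if k = i then if l = j then brk e k l else 0 else 0)"
    unfolding lie_br_def by (intro sum.cong refl) (use assms in \<open>auto simp: ebas_coord\<close>)
  also have "\<dots> = brk e i j"
    using assms by (simp add: sum_if_const)
  finally show ?thesis .
qed

locale metric_lie_iso_setting =
  fixes eps eps' :: real and f :: "real ^ 7 \<Rightarrow> real ^ 7"
  assumes metric_iso: "metric_lie_iso eps eps' f"
begin

abbreviation a :: "nat \<Rightarrow> nat \<Rightarrow> real" where
  "a i k \<equiv> f (ebas i) $ idx k"

lemma linear_f: "linear f"
  using metric_iso by (simp add: metric_lie_iso_def lie_iso_def)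

lemma bracket_coord:
  "i \<in> {1..7} \<Longrightarrow> j \<in> {1..7} \<Longrightarrow>
    lie_br eps' (f (ebas i)) (f (ebas j)) $ idx k = f (brk eps i j) $ idx k"
  using metric_iso by (simp add: metric_lie_iso_def lie_iso_def flip: lie_br_ebas)

lemma ip_image: "ip (f (ebas i)) (f (ebas j)) = ip (ebas i) (ebas j)"
  using metric_iso by (simp add: metric_lie_iso_def)

lemmas coord_simps =
  lie_br_coords wedge_def brk_def brk0_def ip_def ebas_coord linear_0[OF linear_f]
  linear_add[OF linear_f] linear_diff[OF linear_f] linear_neg[OF linear_f] linear_cmul[OF linear_f]

lemma image_ebas_1: "f (ebas 1) = ebas 1"
proof -
  have a35: "a 3 5 = 0"
    using bracket_coord[of 3 5 5] by (simp add: coord_simps)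
  have a75: "a 7 5 = 0"
    using bracket_coord[of 5 7 5] a35 by (simp add: coord_simps)
  have a1_high: "a 1 3 = 0" "a 1 4 = 0" "a 1 5 = 0" "a 1 6 = 0" "a 1 7 = 0"
    using bracket_coord[of 3 7 3] bracket_coord[of 3 7 4] bracket_coord[of 3 7 5]
      bracket_coord[of 3 7 6] bracket_coord[of 3 7 7] a35 a75
    by (simp_all add: coord_simps)
  have a12: "a 1 2 = 0"
  proof (rule ccontr)
    assume "a 1 2 \<noteq> 0"
    then have "a 2 5 = 0" "a 2 6 = 0" "a 6 5 = 0" "a 6 6 = 0"
      using bracket_coord[of 1 2 2] bracket_coord[of 1 2 1] bracket_coord[of 1 6 2]
        bracket_coord[of 1 6 1] a1_high
      by (simp_all add: coord_simps)
    then show False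
      using bracket_coord[of 2 6 2] \<open>a 1 2 \<noteq> 0\<close> by (simp add: coord_simps)
  qed
  have a11: "a 1 1 = 1"
    using bracket_coord[of 1 5 1] ip_image[of 1 5] a1_high a12
    by (simp add: coord_simps) (metis mult_1_right mult_zero_left zero_neq_one)
  show ?thesis
    unfolding vec7_eq_iff atLeastAtMost_1_7 using a1_high a12 a11 by (simp add: ebas_coord)
qed

lemma image_coords_5:
  "a 2 5 = 0" "a 3 5 = 0" "a 4 5 = 0" "a 5 5 = 1" "a 6 5 = 0" "a 7 5 = 0"
  using ip_image[of 2 1] ip_image[of 3 1] ip_image[of 4 1] ip_image[of 5 1] ip_image[of 6 1]
    ip_image[of 7 1]
  by (simp_all add: image_ebas_1 ip_def ebas_coord)

lemma image_ebas_2_coords: "a 2 1 = 0" "a 2 3 = 0" "a 2 4 = 0" "a 2 6 = 0" "a 2 7 = 0"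
proof -
  show a2: "a 2 3 = 0" "a 2 4 = 0" "a 2 6 = 0" "a 2 7 = 0"
    using bracket_coord[of 6 7 3] bracket_coord[of 6 7 4] bracket_coord[of 6 7 6]
      bracket_coord[of 6 7 7] image_coords_5
    by (simp_all add: coord_simps)
  have "a 2 1 = a 2 2 * a 5 6 / 2"
    using bracket_coord[of 2 5 1] a2 image_coords_5 by (simp add: coord_simps)
  moreover have "a 2 1 + a 2 2 * a 5 6 = 0"
    using ip_image[of 2 5] a2 image_coords_5 by (simp add: coord_simps)
  ultimately show "a 2 1 = 0" by linarith
qed

lemma image_coords_22_66: "a 2 2 * a 6 6 = 1"
  using ip_image[of 2 6] image_ebas_2_coords image_coords_5 by (simp add: coord_simps)

lemma image_coord_56: "a 5 6 = 0"
proof -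
  have "a 2 2 * a 5 6 = 0"
    using ip_image[of 2 5] image_ebas_2_coords image_coords_5 by (simp add: coord_simps)
  then show ?thesis using image_coords_22_66 by auto
qed

lemma image_ebas_3_coords: "a 3 4 = 0" "a 3 6 = 0" "a 3 7 = 0"
  using bracket_coord[of 3 5 4] bracket_coord[of 3 5 6] bracket_coord[of 3 5 7]
    image_coords_5 image_coord_56
  by (simp_all add: coord_simps)

lemma image_ebas_7_coords: "a 7 3 = 0" "a 7 4 = 0" "a 7 6 = 0"
proof -
  show a7: "a 7 4 = 0" "a 7 6 = 0"
    using bracket_coord[of 5 7 4] bracket_coord[of 5 7 6] image_coords_5 image_coord_56
      image_ebas_3_coords
    by (simp_all add: coord_simps)
  have "a 7 3 * a 7 7 = 0"
    using ip_image[of 7 7] a7 image_coords_5 by (simp add: coord_simps)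
  moreover have "a 3 3 * a 7 7 = 1"
    using ip_image[of 3 7] a7 image_coords_5 image_ebas_3_coords by (simp add: coord_simps)
  ultimately show "a 7 3 = 0" by auto
qed

lemma image_coords_33_77: "a 3 3 * a 7 7 = 1"
  using ip_image[of 3 7] image_ebas_7_coords image_coords_5 image_ebas_3_coords
  by (simp add: coord_simps)

lemma image_ebas_4_coords: "a 4 4 = a 2 2" "a 4 4 * a 4 4 = 1"
proof -
  have a4: "a 4 3 = 0" "a 4 6 = 0" "a 4 7 = 0"
    using bracket_coord[of 4 5 3] bracket_coord[of 4 5 6] bracket_coord[of 4 5 7]
      image_coords_5 image_coord_56 image_ebas_2_coords
    by (simp_all add: coord_simps)
  show sq: "a 4 4 * a 4 4 = 1"
    using ip_image[of 4 4] a4 image_coords_5 by (simp add: coord_simps)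
  have "a 4 2 = 2 * a 2 2 - 2 * a 4 4"
    using bracket_coord[of 4 5 2] a4 image_coords_5 image_coord_56 by (simp add: coord_simps)
  moreover have "a 6 4 = 2 * a 6 6 - 2 * a 4 4"
    using bracket_coord[of 5 6 4] image_coords_5 image_coord_56 image_ebas_2_coords
    by (simp add: coord_simps)
  moreover have "a 4 2 * a 6 6 = a 4 4 * a 6 4"
    using ip_image[of 4 6] a4 image_coords_5 by (simp add: coord_simps)
  ultimately have "a 4 4 * a 6 6 = 1"
    using sq image_coords_22_66 by algebra
  then show "a 4 4 = a 2 2"
    using image_coords_22_66 by (metis mult.commute mult.left_commute mult_1_right)
qed

lemma image_coord_77: "a 7 7 = 1"
proof -
  have "a 6 6 * a 7 7 = a 2 2"
    using bracket_coord[of 6 7 2] image_coords_5 image_ebas_7_coords by (simp add: coord_simps)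
  then have "a 7 7 = a 2 2 * a 2 2"
    using image_coords_22_66 by (metis mult.assoc mult_1_left)
  then show ?thesis
    using image_ebas_4_coords by simp
qed

lemma parameters_eq: "eps = eps'"
proof -
  have "eps' * a 7 7 = eps * a 3 3"
    using bracket_coord[of 5 7 3] image_ebas_7_coords image_coords_5 image_coord_56
    by (simp add: coord_simps)
  then show ?thesis
    using image_coords_33_77 image_coord_77 by simp
qed

end

(* The eigenvalues of ad e5 on e2, e6, e3, e7 are 1/2, -1, -2, 3/2; the coefficients
   2/3 and 2/7 are the inverses of the gaps 3/2 and 7/2, so the shear shifts \<epsilon> by d. *)
definition shear :: "real \<Rightarrow> real ^ 7 \<Rightarrow> real ^ 7" where
  "shear d x = x + (2 * d / 3 * x $ idx 6) *\<^sub>R ebas 2 - (2 * d / 7 * x $ idx 7) *\<^sub>R ebas 3"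

lemma shear_coords:
  "shear d x $ idx 1 = x $ idx 1"
  "shear d x $ idx 2 = x $ idx 2 + 2 * d / 3 * x $ idx 6"
  "shear d x $ idx 3 = x $ idx 3 - 2 * d / 7 * x $ idx 7"
  "shear d x $ idx 4 = x $ idx 4"
  "shear d x $ idx 5 = x $ idx 5"
  "shear d x $ idx 6 = x $ idx 6"
  "shear d x $ idx 7 = x $ idx 7"
  by (simp_all add: shear_def ebas_coord)

lemma linear_shear: "linear (shear d)"
  by (rule linearI) (simp_all add: vec7_eq_iff atLeastAtMost_1_7 shear_coords algebra_simps)

lemma shear_inverse: "shear (- d) (shear d x) = x"
  by (simp add: vec7_eq_iff atLeastAtMost_1_7 shear_coords)

lemma bij_shear: "bij (shear d)"
  using shear_inverse[of d] shear_inverse[of "- d"] by (intro o_bij[of "shear (- d)"]) auto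

lemma shear_lie_br:
  "shear (eps' - eps) (lie_br eps x y) = lie_br eps' (shear (eps' - eps) x) (shear (eps' - eps) y)"
  by (simp add: vec7_eq_iff atLeastAtMost_1_7 shear_coords lie_br_coords wedge_def field_simps)

theorem mainTheorem15:
  fixes eps eps' :: real
  shows "(\<exists>f. lie_iso eps eps' f) \<and> ((\<exists>f. metric_lie_iso eps eps' f) \<longleftrightarrow> eps = eps')"
proof (intro conjI iffI)
  show "\<exists>f. lie_iso eps eps' f"
    unfolding lie_iso_def using linear_shear bij_shear shear_lie_br by blast
  show "eps = eps'" if "\<exists>f. metric_lie_iso eps eps' f"
    using that metric_lie_iso_setting.parameters_eq metric_lie_iso_setting.intro by blast
  show "\<exists>f. metric_lie_iso eps eps' f" if "eps = eps'"
    using that by (intro exI[of _ id]) (simp add: metric_lie_iso_def lie_iso_def linear_id)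
qed

end
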